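(* Let $X$ be a real Hilbert space, let $A\colon X\rightrightarrows X$ with $\operatorname{dom}A\ne\varnothing$, let $\rho\in\,]-1,+\infty[$, set $D=\operatorname{ran}(\mathrm{Id}+A)$, $T=J_A$ (i.e., $A=T^{-1}-\mathrm{Id}$), and $\alpha=\tfrac{1}{2(\rho+1)}$. Then: (i) $A$ is $\rho$-comonotone $\iff$ $T$ is $\tfrac{1}{2(\rho+1)}$-conically nonexpansive. (ii) $A$ is maximally $\rho$-comonotone $\iff$ [$T$ is $\alpha$-conically nonexpansive and $D=X$]. (iii) $A$ is $(-\tfrac12)$-comonotone $\iff$ $T$ is nonexpansive. (iv) $A$ is maximally $(-\tfrac12)$-comonotone $\iff$ [$T$ is nonexpansive and $D=X$]. (v) [$A$ is $\rho$-comonotone and $\rho>-\tfrac12$] $\iff$ $T$ is $\alpha$-averaged. (vi) [$A$ is maximally $\rho$-comonotone and $\rho>-\tfrac12$] $\iff$ [$T$ is $\alpha$-averaged and $D=X$].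
   Context: $J_A=(\mathrm{Id}+A)^{-1}$ with domain $D$. An operator $N$ with domain $D$ is nonexpansive if it is single-valued and $\|Nx-Ny\|\le\|x-y\|$ for all $x,y\in D$. For $\alpha>0$, $T$ is $\alpha$-conically nonexpansive if $T=(1-\alpha)\mathrm{Id}+\alpha N$ for some nonexpansive $N\colon D\to X$; $T$ is $\alpha$-averaged if this holds with $\alpha\in]0,1[$. For $\rho\in\mathbb R$, $A$ is $\rho$-comonotone if $\langle x-y,u-v\rangle\ge\rho\|u-v\|^2$ for all $(x,u),(y,v)\in\operatorname{gra}A$; maximally $\rho$-comonotone if moreover no $\rho$-comonotone operator has a graph properly containing $\operatorname{gra}A$. *)

theory Defs
  imports "HOL-Analysis.Analysis"
begin

text \<open>Set-valued operators A : X \<rightrightarrows> X are represented by their graphs ('a \<times> 'a) set.\<close>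

definition comonotone :: "real \<Rightarrow> ('a::real_inner \<times> 'a) set \<Rightarrow> bool" where
  "comonotone \<rho> A \<longleftrightarrow>
     (\<forall>x u y v. (x, u) \<in> A \<longrightarrow> (y, v) \<in> A \<longrightarrow> inner (x - y) (u - v) \<ge> \<rho> * (norm (u - v))\<^sup>2)"

definition max_comonotone :: "real \<Rightarrow> ('a::real_inner \<times> 'a) set \<Rightarrow> bool" where
  "max_comonotone \<rho> A \<longleftrightarrow> comonotone \<rho> A \<and> (\<forall>B. comonotone \<rho> B \<and> A \<subseteq> B \<longrightarrow> B = A)"

definition resolvent :: "('a::real_vector \<times> 'a) set \<Rightarrow> ('a \<times> 'a) set" where
  "resolvent A = {(x + u, x) | x u. (x, u) \<in> A}"

definition ran_id_plus :: "('a::real_vector \<times> 'a) set \<Rightarrow> 'a set" where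
  "ran_id_plus A = {x + u | x u. (x, u) \<in> A}"

definition nonexpansive_on :: "'a set \<Rightarrow> ('a::real_normed_vector \<Rightarrow> 'a) \<Rightarrow> bool" where
  "nonexpansive_on D N \<longleftrightarrow> (\<forall>x\<in>D. \<forall>y\<in>D. norm (N x - N y) \<le> norm (x - y))"

definition nonexpansive_op :: "'a set \<Rightarrow> ('a::real_normed_vector \<times> 'a) set \<Rightarrow> bool" where
  "nonexpansive_op D T \<longleftrightarrow> (\<exists>N. nonexpansive_on D N \<and> T = {(x, N x) | x. x \<in> D})"

definition conically_nonexpansive :: "real \<Rightarrow> 'a set \<Rightarrow> ('a::real_normed_vector \<times> 'a) set \<Rightarrow> bool" where
  "conically_nonexpansive \<alpha> D T \<longleftrightarrow> \<alpha> > 0 \<and>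
     (\<exists>N. nonexpansive_on D N \<and> T = {(x, (1 - \<alpha>) *\<^sub>R x + \<alpha> *\<^sub>R N x) | x. x \<in> D})"

definition averaged :: "real \<Rightarrow> 'a set \<Rightarrow> ('a::real_normed_vector \<times> 'a) set \<Rightarrow> bool" where
  "averaged \<alpha> D T \<longleftrightarrow> 0 < \<alpha> \<and> \<alpha> < 1 \<and> conically_nonexpansive \<alpha> D T"

end

theory Submission
  imports Defs
begin

text \<open>For \<open>\<rho> > -1\<close> the identity
  \<open>\<parallel>a + b\<parallel>\<^sup>2 - \<parallel>a - (2\<rho>+1)b\<parallel>\<^sup>2 = 4(\<rho>+1)(\<langle>a,b\<rangle> - \<rho>\<parallel>b\<parallel>\<^sup>2)\<close>, applied to \<open>a = x - y\<close> and
  \<open>b = u - v\<close>, says that \<open>A\<close> is \<open>\<rho>\<close>-comonotone exactly when \<open>N: x + u \<mapsto> x - (2\<rho>+1)u\<close> is a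
  well-defined nonexpansive map on \<open>ran(Id + A)\<close>; and \<open>J\<^sub>A = (1 - \<alpha>)Id + \<alpha>N\<close> with
  \<open>\<alpha> = 1/(2(\<rho>+1))\<close>. This gives (i), (iii) and (v).

  For maximality, a comonotone extension of \<open>A\<close> cannot add a point over \<open>ran(Id + A)\<close>, so
  \<open>ran(Id + A) = X\<close> forces maximality. Conversely, given \<open>z\<close>, the Kirszbraun--Valentine
  theorem extends \<open>N\<close> nonexpansively to \<open>z\<close>, and the new value yields a pair \<open>(p, q)\<close> with
  \<open>p + q = z\<close> that can be added to \<open>A\<close> keeping it comonotone. The extension theorem is proved
  for finitely many points by maximising a concave function over a convex hull, and in general
  by the finite intersection property of bounded closed convex sets in a Hilbert space, which
  follows by a minimal-norm argument.\<close>

section \<open>Comonotone operators and their resolvents\<close>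

lemma comonotone_ineq_iff_norm_le:
  fixes a b :: "'a::real_inner"
  assumes "\<rho> > -1"
  shows "\<rho> * (norm b)\<^sup>2 \<le> inner a b \<longleftrightarrow> norm (a - (2*\<rho>+1) *\<^sub>R b) \<le> norm (a + b)"
proof -
  have "(norm (a + b))\<^sup>2 - (norm (a - (2*\<rho>+1) *\<^sub>R b))\<^sup>2 = 4 * (\<rho> + 1) * (inner a b - \<rho> * (norm b)\<^sup>2)"
    by (simp add: power2_norm_eq_inner inner_add_left inner_add_right inner_diff_left
        inner_diff_right inner_commute algebra_simps)
  with assms show ?thesis
    by (smt (verit, best) norm_ge_zero power_mono power2_le_imp_le zero_le_mult_iff)
qed

lemma comonotone_Id_plus_inj:
  assumes "comonotone \<rho> A" "\<rho> > -1" "(x, u) \<in> A" "(y, v) \<in> A" "x + u = y + v"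
  shows "x = y \<and> u = v"
proof -
  have "x - y = - (u - v)"
    using assms(5) by (simp add: algebra_simps)
  then have "inner (x - y) (u - v) = - (norm (u - v))\<^sup>2"
    by (simp only: inner_minus_left power2_norm_eq_inner)
  moreover have "\<rho> * (norm (u - v))\<^sup>2 \<le> inner (x - y) (u - v)"
    using assms(1,3,4) unfolding comonotone_def by blast
  ultimately have "(\<rho> + 1) * (norm (u - v))\<^sup>2 \<le> 0"
    by (simp add: algebra_simps)
  with assms(2) have "u = v"
    by (simp add: mult_le_0_iff)
  with assms(5) show ?thesis
    by simp
qed

lemma comonotone_imp_nonexpansive_reflection:
  assumes "comonotone \<rho> A" "\<rho> > -1"
  obtains N where "nonexpansive_on (ran_id_plus A) N"
    and "\<And>x u. (x, u) \<in> A \<Longrightarrow> N (x + u) = x - (2*\<rho>+1) *\<^sub>R u"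
proof -
  define J where "J z = (SOME p. p \<in> A \<and> fst p + snd p = z)" for z
  have J: "J (x + u) = (x, u)" if "(x, u) \<in> A" for x u
  proof -
    have "J (x + u) \<in> A \<and> fst (J (x + u)) + snd (J (x + u)) = x + u"
      unfolding J_def by (rule someI[of _ "(x, u)"]) (use that in auto)
    then show ?thesis
      using comonotone_Id_plus_inj[OF assms _ that] by (metis prod.collapse)
  qed
  define N where "N z = fst (J z) - (2*\<rho>+1) *\<^sub>R snd (J z)" for z
  have N: "N (x + u) = x - (2*\<rho>+1) *\<^sub>R u" if "(x, u) \<in> A" for x u
    using J[OF that] by (simp add: N_def)
  have "nonexpansive_on (ran_id_plus A) N"
    unfolding nonexpansive_on_def ran_id_plus_def
  proof clarify
    fix x u y v
    assume xu: "(x, u) \<in> A" and yv: "(y, v) \<in> A"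
    then have "\<rho> * (norm (u - v))\<^sup>2 \<le> inner (x - y) (u - v)"
      using assms(1) unfolding comonotone_def by blast
    then have "norm ((x - y) - (2*\<rho>+1) *\<^sub>R (u - v)) \<le> norm ((x - y) + (u - v))"
      using comonotone_ineq_iff_norm_le[OF assms(2)] by blast
    then show "norm (N (x + u) - N (y + v)) \<le> norm (x + u - (y + v))"
      unfolding N[OF xu] N[OF yv] by (simp add: algebra_simps)
  qed
  with N that show ?thesis
    by blast
qed

lemma conic_combination_eq_iff:
  fixes x u n :: "'a::real_vector"
  assumes "\<rho> > -1"
  defines "\<alpha> \<equiv> 1 / (2 * (\<rho> + 1))"
  shows "(1 - \<alpha>) *\<^sub>R (x + u) + \<alpha> *\<^sub>R n = x \<longleftrightarrow> n = x - (2*\<rho>+1) *\<^sub>R u"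
proof -
  have \<alpha>: "\<alpha> \<noteq> 0" "\<alpha> * (2*\<rho>+1) = 1 - \<alpha>"
    using assms by (auto simp: \<alpha>_def field_simps)
  have "\<alpha> *\<^sub>R (n - (x - (2*\<rho>+1) *\<^sub>R u)) = \<alpha> *\<^sub>R n - \<alpha> *\<^sub>R x + (\<alpha> * (2*\<rho>+1)) *\<^sub>R u"
    by (simp add: algebra_simps)
  also have "\<dots> = (1 - \<alpha>) *\<^sub>R (x + u) + \<alpha> *\<^sub>R n - x"
    unfolding \<alpha>(2) by (simp add: algebra_simps)
  finally show ?thesis
    using \<alpha>(1) by (metis eq_iff_diff_eq_0 scaleR_eq_0_iff)
qed

lemma comonotone_iff_conically_nonexpansive:
  assumes "\<rho> > -1"
  shows "comonotone \<rho> A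
    \<longleftrightarrow> conically_nonexpansive (1 / (2 * (\<rho> + 1))) (ran_id_plus A) (resolvent A)"
    (is "_ \<longleftrightarrow> conically_nonexpansive ?\<alpha> _ _")
proof
  assume "comonotone \<rho> A"
  then obtain N where N: "nonexpansive_on (ran_id_plus A) N"
    and NA: "\<And>x u. (x, u) \<in> A \<Longrightarrow> N (x + u) = x - (2*\<rho>+1) *\<^sub>R u"
    using comonotone_imp_nonexpansive_reflection assms by blast
  have "(1 - ?\<alpha>) *\<^sub>R (x + u) + ?\<alpha> *\<^sub>R N (x + u) = x" if "(x, u) \<in> A" for x u
    using NA[OF that] conic_combination_eq_iff[OF assms] by blast
  then have "resolvent A = {(z, (1 - ?\<alpha>) *\<^sub>R z + ?\<alpha> *\<^sub>R N z) | z. z \<in> ran_id_plus A}"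
    unfolding resolvent_def ran_id_plus_def by fastforce
  with N assms show "conically_nonexpansive ?\<alpha> (ran_id_plus A) (resolvent A)"
    unfolding conically_nonexpansive_def by auto
next
  assume "conically_nonexpansive ?\<alpha> (ran_id_plus A) (resolvent A)"
  then obtain N where N: "nonexpansive_on (ran_id_plus A) N"
    and T: "resolvent A = {(z, (1 - ?\<alpha>) *\<^sub>R z + ?\<alpha> *\<^sub>R N z) | z. z \<in> ran_id_plus A}"
    unfolding conically_nonexpansive_def by blast
  have NA: "N (x + u) = x - (2*\<rho>+1) *\<^sub>R u" if "(x, u) \<in> A" for x u
  proof -
    have "(x + u, x) \<in> resolvent A"
      using that unfolding resolvent_def by blast
    then have "(1 - ?\<alpha>) *\<^sub>R (x + u) + ?\<alpha> *\<^sub>R N (x + u) = x"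
      using T by (simp add: eq_commute)
    then show ?thesis
      using conic_combination_eq_iff[OF assms] by blast
  qed
  show "comonotone \<rho> A"
    unfolding comonotone_def
  proof clarify
    fix x u y v
    assume xu: "(x, u) \<in> A" and yv: "(y, v) \<in> A"
    then have "norm (N (x + u) - N (y + v)) \<le> norm (x + u - (y + v))"
      using N unfolding nonexpansive_on_def ran_id_plus_def by blast
    then have "norm ((x - y) - (2*\<rho>+1) *\<^sub>R (u - v)) \<le> norm ((x - y) + (u - v))"
      unfolding NA[OF xu] NA[OF yv] by (simp add: algebra_simps)
    then show "\<rho> * (norm (u - v))\<^sup>2 \<le> inner (x - y) (u - v)"
      using comonotone_ineq_iff_norm_le[OF assms] by blast
  qed
qed

lemma nonexpansive_op_iff_conically_nonexpansive_1:
  "nonexpansive_op D T \<longleftrightarrow> conically_nonexpansive 1 D T"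
  unfolding nonexpansive_op_def conically_nonexpansive_def by simp

section \<open>One-point extension of nonexpansive maps in Hilbert space\<close>

lemma weighted_double_sum_sq_dist:
  fixes f :: "'b \<Rightarrow> 'a::real_inner"
  assumes "sum \<mu> S = 1"
  shows "(\<Sum>x\<in>S. \<Sum>y\<in>S. \<mu> x * \<mu> y * (norm (f x - f y))\<^sup>2)
       = 2 * (\<Sum>x\<in>S. \<mu> x * (norm (f x))\<^sup>2) - 2 * (norm (\<Sum>x\<in>S. \<mu> x *\<^sub>R f x))\<^sup>2"
proof -
  have sq: "(norm (f x - f y))\<^sup>2 = (norm (f x))\<^sup>2 + (norm (f y))\<^sup>2 - 2 * inner (f x) (f y)" for x y
    by (simp add: power2_norm_eq_inner inner_diff_left inner_diff_right inner_commute)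
  have mean: "(norm (\<Sum>x\<in>S. \<mu> x *\<^sub>R f x))\<^sup>2 = (\<Sum>x\<in>S. \<Sum>y\<in>S. \<mu> x * \<mu> y * inner (f x) (f y))"
    by (simp add: power2_norm_eq_inner inner_sum_left inner_sum_right sum_distrib_left mult_ac inner_commute)
  have left: "(\<Sum>x\<in>S. \<Sum>y\<in>S. \<mu> x * \<mu> y * (norm (f x))\<^sup>2) = (\<Sum>x\<in>S. \<mu> x * (norm (f x))\<^sup>2)"
    using assms by (simp add: mult.commute mult.left_commute flip: sum_distrib_left sum_distrib_right)
  have right: "(\<Sum>x\<in>S. \<Sum>y\<in>S. \<mu> x * \<mu> y * (norm (f y))\<^sup>2) = (\<Sum>x\<in>S. \<mu> x * (norm (f x))\<^sup>2)"
    using left sum.swap[of "\<lambda>x y. \<mu> x * \<mu> y * (norm (f y))\<^sup>2" S S] by (simp add: mult_ac)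
  have "(\<Sum>x\<in>S. \<Sum>y\<in>S. \<mu> x * \<mu> y * (norm (f x - f y))\<^sup>2)
      = (\<Sum>x\<in>S. \<Sum>y\<in>S. \<mu> x * \<mu> y * (norm (f x))\<^sup>2)
        + (\<Sum>x\<in>S. \<Sum>y\<in>S. \<mu> x * \<mu> y * (norm (f y))\<^sup>2)
        - 2 * (\<Sum>x\<in>S. \<Sum>y\<in>S. \<mu> x * \<mu> y * inner (f x) (f y))"
    unfolding sq by (simp add: algebra_simps sum.distrib sum_subtractf sum_distrib_left)
  then show ?thesis
    unfolding left right mean by simp
qed

lemma nonexpansive_weighted_sq_norm_bound:
  fixes N :: "'a::real_inner \<Rightarrow> 'a"
  assumes "nonexpansive_on S N" "\<forall>x\<in>S. 0 \<le> \<mu> x" "sum \<mu> S = 1"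
  shows "(\<Sum>x\<in>S. \<mu> x * ((norm (N x))\<^sup>2 - (norm (z - x))\<^sup>2)) \<le> (norm (\<Sum>x\<in>S. \<mu> x *\<^sub>R N x))\<^sup>2"
proof -
  define m where "m = (\<Sum>x\<in>S. \<mu> x *\<^sub>R x)"
  have "(\<Sum>x\<in>S. \<Sum>y\<in>S. \<mu> x * \<mu> y * (norm (N x - N y))\<^sup>2)
      \<le> (\<Sum>x\<in>S. \<Sum>y\<in>S. \<mu> x * \<mu> y * (norm (x - y))\<^sup>2)"
    using assms(1,2) unfolding nonexpansive_on_def
    by (intro sum_mono mult_left_mono power_mono) auto
  then have spread: "(\<Sum>x\<in>S. \<mu> x * (norm (N x))\<^sup>2) - (norm (\<Sum>x\<in>S. \<mu> x *\<^sub>R N x))\<^sup>2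
      \<le> (\<Sum>x\<in>S. \<mu> x * (norm x)\<^sup>2) - (norm m)\<^sup>2"
    unfolding weighted_double_sum_sq_dist[OF assms(3)] m_def by simp
  have "(\<Sum>x\<in>S. \<mu> x * (norm (z - x))\<^sup>2)
      = (\<Sum>x\<in>S. \<mu> x) * (norm z)\<^sup>2 - 2 * inner z (\<Sum>x\<in>S. \<mu> x *\<^sub>R x) + (\<Sum>x\<in>S. \<mu> x * (norm x)\<^sup>2)"
    by (simp add: power2_norm_eq_inner inner_diff_left inner_diff_right inner_commute
        inner_sum_right algebra_simps sum.distrib sum_subtractf sum_distrib_left sum_distrib_right)
  also have "\<dots> = (norm (z - m))\<^sup>2 + (\<Sum>x\<in>S. \<mu> x * (norm x)\<^sup>2) - (norm m)\<^sup>2"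
    by (simp add: assms(3) m_def power2_norm_eq_inner inner_diff_left inner_diff_right inner_commute)
  finally have "(\<Sum>x\<in>S. \<mu> x * (norm x)\<^sup>2) - (norm m)\<^sup>2 \<le> (\<Sum>x\<in>S. \<mu> x * (norm (z - x))\<^sup>2)"
    by simp
  with spread show ?thesis
    by (simp add: right_diff_distrib sum_subtractf)
qed

lemma convex_hull_finite_image_weights:
  fixes f :: "'b \<Rightarrow> 'a::real_vector"
  assumes "finite S" "y \<in> convex hull (f ` S)"
  obtains \<mu> where "\<forall>x\<in>S. 0 \<le> \<mu> x" "sum \<mu> S = 1" "y = (\<Sum>x\<in>S. \<mu> x *\<^sub>R f x)"
proof -
  define R where "R = {\<Sum>x\<in>S. \<mu> x *\<^sub>R f x | \<mu>. (\<forall>x\<in>S. 0 \<le> \<mu> x) \<and> sum \<mu> S = 1}"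
  have "f x \<in> R" if "x \<in> S" for x
  proof -
    have "(\<Sum>x'\<in>S. (if x' = x then 1 else 0) *\<^sub>R f x') = (\<Sum>x'\<in>S. if x' = x then f x' else 0)"
      by (intro sum.cong) auto
    then have "(\<Sum>x'\<in>S. (if x' = x then 1 else 0) *\<^sub>R f x') = f x"
      "(\<Sum>x'\<in>S. if x' = x then 1 else 0 :: real) = 1"
      using assms(1) that by (simp_all add: sum.delta')
    then show ?thesis
      unfolding R_def by (intro CollectI exI[of _ "\<lambda>x'. if x' = x then 1 else 0"]) auto
  qed
  moreover have "convex R"
    unfolding convex_def
  proof (intro ballI allI impI)
    fix p q and s t :: real
    assume "p \<in> R" "q \<in> R" "0 \<le> s" "0 \<le> t" "s + t = 1"
    then obtain \<mu> \<nu> where "\<forall>x\<in>S. 0 \<le> \<mu> x" "sum \<mu> S = 1" "p = (\<Sum>x\<in>S. \<mu> x *\<^sub>R f x)"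
      "\<forall>x\<in>S. 0 \<le> \<nu> x" "sum \<nu> S = 1" "q = (\<Sum>x\<in>S. \<nu> x *\<^sub>R f x)"
      unfolding R_def by blast
    with \<open>0 \<le> s\<close> \<open>0 \<le> t\<close> \<open>s + t = 1\<close> show "s *\<^sub>R p + t *\<^sub>R q \<in> R"
      unfolding R_def
      by (intro CollectI exI[of _ "\<lambda>x. s * \<mu> x + t * \<nu> x"])
        (simp add: sum.distrib scaleR_add_left scaleR_sum_right flip: sum_distrib_left)
  qed
  ultimately have "convex hull (f ` S) \<subseteq> R"
    by (intro hull_minimal) auto
  with assms(2) that show ?thesis
    unfolding R_def by blast
qed

lemma convex_argmax_first_order:
  fixes K :: "('a::real_inner \<times> real) set"
  assumes "convex K" "p \<in> K" "q \<in> K"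
    and max: "\<And>r. r \<in> K \<Longrightarrow> snd r - (norm (fst r))\<^sup>2 \<le> snd p - (norm (fst p))\<^sup>2"
  shows "snd q - snd p \<le> 2 * inner (fst p) (fst q - fst p)"
proof -
  define a d \<delta> where "a = fst p" and "d = fst q - fst p" and "\<delta> = snd q - snd p"
  have "\<delta> - 2 * inner a d \<le> t * (norm d)\<^sup>2" if t: "0 < t" "t < 1" for t
  proof -
    have "(1 - t) *\<^sub>R p + t *\<^sub>R q \<in> K"
      using assms(1-3) t by (intro convexD) auto
    from max[OF this]
    have "snd p + t * \<delta> - (norm (a + t *\<^sub>R d))\<^sup>2 \<le> snd p - (norm a)\<^sup>2"
      by (simp add: a_def d_def \<delta>_def algebra_simps)
    moreover have "(norm (a + t *\<^sub>R d))\<^sup>2 = (norm a)\<^sup>2 + t * (2 * inner a d) + t * (t * (norm d)\<^sup>2)"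
      by (simp add: power2_norm_eq_inner inner_add_left inner_add_right inner_commute algebra_simps)
    ultimately have "t * (\<delta> - 2 * inner a d) \<le> t * (t * (norm d)\<^sup>2)"
      by (simp add: algebra_simps)
    with t show ?thesis
      by simp
  qed
  then have "\<forall>\<^sub>F t in at_right 0. \<delta> - 2 * inner a d \<le> t * (norm d)\<^sup>2"
    using eventually_at_right_real[of 0 1] by (auto elim: eventually_mono)
  moreover have "((\<lambda>t. t * (norm d)\<^sup>2) \<longlongrightarrow> 0) (at_right 0)"
    by (intro tendsto_eq_intros) auto
  ultimately have "\<delta> - 2 * inner a d \<le> 0"
    by (intro tendsto_lowerbound) auto
  then show ?thesis
    by (simp add: a_def d_def \<delta>_def)
qed

lemma finite_nonexpansive_one_point_extension:
  fixes N :: "'a::real_inner \<Rightarrow> 'a"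
  assumes "finite S" "S \<noteq> {}" "nonexpansive_on S N"
  shows "\<exists>w. \<forall>x\<in>S. norm (w - N x) \<le> norm (z - x)"
proof -
  define c where "c x = (norm (N x))\<^sup>2 - (norm (z - x))\<^sup>2" for x
  define K where "K = convex hull ((\<lambda>x. (N x, c x)) ` S)"
  have "compact K" "K \<noteq> {}"
    using assms(1,2) by (simp_all add: K_def finite_imp_compact_convex_hull)
  moreover have "continuous_on K (\<lambda>r. snd r - (norm (fst r))\<^sup>2)"
    by (intro continuous_intros)
  ultimately obtain p where p: "p \<in> K"
    and max: "\<And>r. r \<in> K \<Longrightarrow> snd r - (norm (fst r))\<^sup>2 \<le> snd p - (norm (fst p))\<^sup>2"
    using continuous_attains_sup[of K "\<lambda>r. snd r - (norm (fst r))\<^sup>2"] by auto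
  obtain \<mu> where "\<forall>x\<in>S. 0 \<le> \<mu> x" "sum \<mu> S = 1" "p = (\<Sum>x\<in>S. \<mu> x *\<^sub>R (N x, c x))"
    using convex_hull_finite_image_weights[OF assms(1) p[unfolded K_def]] .
  then have snd_p: "snd p \<le> (norm (fst p))\<^sup>2"
    using nonexpansive_weighted_sq_norm_bound[OF assms(3)] by (simp add: fst_sum snd_sum c_def)
  show ?thesis
  proof (intro exI ballI)
    fix x
    assume "x \<in> S"
    then have "(N x, c x) \<in> K"
      unfolding K_def by (simp add: hull_inc)
    then have "c x - snd p \<le> 2 * inner (fst p) (N x - fst p)"
      using convex_argmax_first_order[OF _ p _ max, of "(N x, c x)"]
      by (simp add: K_def convex_convex_hull)
    moreover have "(norm (fst p - N x))\<^sup>2 = (norm (N x))\<^sup>2 - 2 * inner (fst p) (N x) + (norm (fst p))\<^sup>2"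
      "inner (fst p) (N x - fst p) = inner (fst p) (N x) - (norm (fst p))\<^sup>2"
      by (simp_all add: power2_norm_eq_inner inner_diff_right inner_diff_left inner_commute)
    ultimately have "(norm (fst p - N x))\<^sup>2 \<le> (norm (z - x))\<^sup>2"
      using snd_p unfolding c_def by linarith
    then show "norm (fst p - N x) \<le> norm (z - x)"
      by (rule power2_le_imp_le) simp
  qed
qed

lemma Cauchy_if_dist_le_null:
  fixes X :: "nat \<Rightarrow> 'a::metric_space"
  assumes "\<And>n m. n \<le> m \<Longrightarrow> dist (X n) (X m) \<le> r n" and "r \<longlonglongrightarrow> 0"
  shows "Cauchy X"
proof (rule metric_CauchyI)
  fix e :: real
  assume "e > 0"
  with assms(2) obtain M where M: "\<And>n. n \<ge> M \<Longrightarrow> r n < e"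
    by (metis eventually_sequentially order_tendstoD(2))
  have "dist (X m) (X n) < e" if "m \<ge> M" "n \<ge> M" for m n
    using assms(1)[of m n] assms(1)[of n m] M[of m] M[of n] that
    by (cases "m \<le> n") (auto simp: dist_commute)
  then show "\<exists>M. \<forall>m\<ge>M. \<forall>n\<ge>M. dist (X m) (X n) < e"
    by blast
qed

definition inf_sq_norm :: "'a::real_normed_vector set \<Rightarrow> real" where
  "inf_sq_norm C = Inf ((\<lambda>w. (norm w)\<^sup>2) ` C)"

lemma bdd_below_sq_norm: "bdd_below ((\<lambda>w. (norm w)\<^sup>2) ` C)"
  by (rule bdd_belowI[of _ 0]) auto

lemma inf_sq_norm_le: "w \<in> C \<Longrightarrow> inf_sq_norm C \<le> (norm w)\<^sup>2"
  unfolding inf_sq_norm_def by (intro cInf_lower bdd_below_sq_norm) auto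

lemma inf_sq_norm_antimono: "C \<noteq> {} \<Longrightarrow> C \<subseteq> B \<Longrightarrow> inf_sq_norm B \<le> inf_sq_norm C"
  unfolding inf_sq_norm_def by (intro cInf_superset_mono bdd_below_sq_norm) auto

lemma inf_sq_norm_less_iff:
  "C \<noteq> {} \<Longrightarrow> inf_sq_norm C < t \<longleftrightarrow> (\<exists>w\<in>C. (norm w)\<^sup>2 < t)"
  unfolding inf_sq_norm_def using cInf_less_iff[OF _ bdd_below_sq_norm] by blast

lemma convex_near_inf_sq_norm_dist_le:
  fixes C :: "'a::real_inner set"
  assumes "convex C" "x \<in> C" "y \<in> C" "s - e < inf_sq_norm C"
    and "(norm x)\<^sup>2 < s + e" "(norm y)\<^sup>2 < s + e"
  shows "norm (x - y) \<le> sqrt (8 * e)"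
proof -
  have "(1/2) *\<^sub>R x + (1/2) *\<^sub>R y \<in> C"
    using assms(1-3) by (intro convexD) auto
  then have "inf_sq_norm C \<le> (norm ((1/2) *\<^sub>R (x + y)))\<^sup>2"
    by (simp add: inf_sq_norm_le scaleR_add_right)
  then have "4 * inf_sq_norm C \<le> (norm (x + y))\<^sup>2"
    by (simp add: power_divide)
  moreover have "(norm (x - y))\<^sup>2 + (norm (x + y))\<^sup>2 = 2 * (norm x)\<^sup>2 + 2 * (norm y)\<^sup>2"
    by (simp add: power2_norm_eq_inner inner_add_left inner_add_right inner_diff_left
        inner_diff_right inner_commute)
  ultimately have "(norm (x - y))\<^sup>2 \<le> 8 * e"
    using assms(4-6) by linarith
  then show ?thesis
    by (rule real_le_rsqrt)
qed

lemma Int_closed_decreasing_refinement: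
  assumes "\<And>B C. B \<in> \<F> \<Longrightarrow> C \<in> \<F> \<Longrightarrow> B \<inter> C \<in> \<F>" "\<And>n. C n \<in> \<F>"
  obtains G where "\<And>n. G n \<in> \<F>" "\<And>n. G n \<subseteq> C n" "decseq G"
proof -
  define G where "G = rec_nat (C 0) (\<lambda>n B. B \<inter> C (Suc n))"
  have G_0: "G 0 = C 0" and G_Suc: "G (Suc n) = G n \<inter> C (Suc n)" for n
    by (simp_all add: G_def)
  have "G n \<in> \<F> \<and> G n \<subseteq> C n" for n
    by (induction n) (auto simp: G_0 G_Suc intro!: assms)
  moreover have "decseq G"
    by (rule decseq_SucI) (simp add: G_Suc)
  ultimately show ?thesis
    using that by blast
qed

lemma decseq_convex_near_inf_sq_norm_converge:
  fixes G :: "nat \<Rightarrow> 'a::{real_inner,complete_space} set"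
  assumes "decseq G" "\<And>n. convex (G n)" "\<And>n. s - \<epsilon> n < inf_sq_norm (G n)"
    and "decseq \<epsilon>" "\<epsilon> \<longlonglongrightarrow> 0"
    and x: "\<And>n. x n \<in> G n \<and> (norm (x n))\<^sup>2 < s + \<epsilon> n"
  obtains p where "\<And>y. (\<And>n. y n \<in> G n \<and> (norm (y n))\<^sup>2 < s + \<epsilon> n) \<Longrightarrow> y \<longlonglongrightarrow> p"
proof -
  have close: "norm (x n - y) \<le> sqrt (8 * \<epsilon> n)" if "y \<in> G n" "(norm y)\<^sup>2 < s + \<epsilon> n" for n y
    using convex_near_inf_sq_norm_dist_le[OF assms(2) _ that(1) assms(3)] x that(2) by blast
  have r: "(\<lambda>n. sqrt (8 * \<epsilon> n)) \<longlonglongrightarrow> 0"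
    using tendsto_real_sqrt[OF tendsto_mult_right_zero[OF assms(5), of 8]] by simp
  have "Cauchy x"
  proof (rule Cauchy_if_dist_le_null[OF _ r])
    fix n m :: nat
    assume "n \<le> m"
    then have "x m \<in> G n" "(norm (x m))\<^sup>2 < s + \<epsilon> n"
      using x[of m] decseqD[OF assms(1)] decseqD[OF assms(4)] by fastforce+
    then show "dist (x n) (x m) \<le> sqrt (8 * \<epsilon> n)"
      using close by (simp add: dist_norm)
  qed
  then obtain p where p: "x \<longlonglongrightarrow> p"
    using Cauchy_convergent_iff convergent_def by blast
  have "y \<longlonglongrightarrow> p" if y: "\<And>n. y n \<in> G n \<and> (norm (y n))\<^sup>2 < s + \<epsilon> n" for y
  proof -
    have "(\<lambda>n. x n - y n) \<longlonglongrightarrow> 0"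
      using close y by (intro Lim_null_comparison[OF _ r]) (simp add: always_eventually)
    from tendsto_diff[OF p this] show ?thesis
      by simp
  qed
  then show ?thesis
    using that by blast
qed

lemma Inter_bounded_closed_convex_nonempty:
  fixes \<F> :: "'a::{real_inner,complete_space} set set"
  assumes "\<F> \<noteq> {}" and F: "\<And>C. C \<in> \<F> \<Longrightarrow> closed C \<and> convex C \<and> C \<noteq> {}"
    and Int: "\<And>B C. B \<in> \<F> \<Longrightarrow> C \<in> \<F> \<Longrightarrow> B \<inter> C \<in> \<F>" and "bounded (\<Union>\<F>)"
  shows "\<Inter>\<F> \<noteq> {}"
proof -
  from assms(4) obtain M where M: "\<forall>w\<in>\<Union>\<F>. norm w \<le> M"
    unfolding bounded_iff ..
  have "inf_sq_norm C \<le> M\<^sup>2" if C: "C \<in> \<F>" for C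
  proof -
    obtain w where "w \<in> C" "norm w \<le> M"
      using F M C by blast
    then show ?thesis
      using inf_sq_norm_le[of w C] by (smt (verit) norm_ge_zero power_mono)
  qed
  then have bdd: "bdd_above (inf_sq_norm ` \<F>)"
    by (intro bdd_aboveI[of _ "M\<^sup>2"]) auto
  \<comment> \<open>Near-minimal points of members get close to each other as their squared norms
    approach \<open>s\<close> (parallelogram law), so they converge to one point lying in every member.\<close>
  define s where "s = Sup (inf_sq_norm ` \<F>)"
  have near: "\<exists>w\<in>C. (norm w)\<^sup>2 < s + e" if "C \<in> \<F>" "e > 0" for C e
    using F[OF that(1)] that cSup_upper[OF _ bdd, of "inf_sq_norm C"]
    by (simp add: s_def flip: inf_sq_norm_less_iff)
  define \<epsilon> :: "nat \<Rightarrow> real" where "\<epsilon> n = inverse (real (Suc n))" for n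
  have \<epsilon>: "\<epsilon> n > 0" "decseq \<epsilon>" "\<epsilon> \<longlonglongrightarrow> 0" for n
    using LIMSEQ_inverse_real_of_nat by (auto simp: \<epsilon>_def[abs_def] decseq_def le_imp_inverse_le)
  have "\<exists>C. C \<in> \<F> \<and> s - \<epsilon> n < inf_sq_norm C" for n
    using less_cSup_iff[OF _ bdd, of "s - \<epsilon> n"] \<open>\<F> \<noteq> {}\<close> \<epsilon>(1)[of n] by (auto simp: s_def)
  then obtain C where "\<And>n. C n \<in> \<F>" and C: "\<And>n. s - \<epsilon> n < inf_sq_norm (C n)"
    by metis
  then obtain G where G: "\<And>n. G n \<in> \<F>" "\<And>n. G n \<subseteq> C n" "decseq G"
    using Int_closed_decreasing_refinement Int by metis
  have G_inf: "s - \<epsilon> n < inf_sq_norm (G n)" for n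
    using C[of n] inf_sq_norm_antimono[OF _ G(2)] F G(1) by (meson less_le_trans)
  have near_seq: "\<exists>y. \<forall>n. y n \<in> G n \<inter> B \<and> (norm (y n))\<^sup>2 < s + \<epsilon> n" if "B \<in> \<F>" for B
    using choice[of "\<lambda>n w. w \<in> G n \<inter> B \<and> (norm w)\<^sup>2 < s + \<epsilon> n"] near[OF Int[OF G(1) that] \<epsilon>(1)]
    by blast
  then obtain x where "\<And>n. x n \<in> G n \<and> (norm (x n))\<^sup>2 < s + \<epsilon> n"
    using \<open>\<F> \<noteq> {}\<close> by blast
  then obtain p where p: "\<And>y. (\<And>n. y n \<in> G n \<and> (norm (y n))\<^sup>2 < s + \<epsilon> n) \<Longrightarrow> y \<longlonglongrightarrow> p"
    using decseq_convex_near_inf_sq_norm_converge[OF G(3) _ G_inf \<epsilon>(2,3)] F G(1) by metis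
  have "p \<in> B" if B: "B \<in> \<F>" for B
  proof -
    obtain y where y: "\<And>n. y n \<in> G n \<inter> B \<and> (norm (y n))\<^sup>2 < s + \<epsilon> n"
      using near_seq[OF B] by blast
    with p have "y \<longlonglongrightarrow> p"
      by blast
    moreover have "closed B" "\<And>n. y n \<in> B"
      using y F[OF B] by auto
    ultimately show "p \<in> B"
      using closed_sequentially by blast
  qed
  then show ?thesis
    by blast
qed

lemma nonexpansive_one_point_extension:
  fixes N :: "'a::{real_inner,complete_space} \<Rightarrow> 'a"
  assumes "nonexpansive_on D N"
  shows "\<exists>w. \<forall>y\<in>D. norm (w - N y) \<le> norm (z - y)"
proof (cases "D = {}")
  case False
  then obtain y0 where "y0 \<in> D"
    by blast
  define B where "B y = cball (N y) (norm (z - y))" for y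
  have B_iff: "w \<in> B y \<longleftrightarrow> norm (w - N y) \<le> norm (z - y)" for w y
    by (simp add: B_def dist_norm norm_minus_commute)
  define \<F> where "\<F> = {B y0 \<inter> \<Inter>(B ` S) | S. finite S \<and> S \<subseteq> D}"
  have "\<Inter>\<F> \<noteq> {}"
  proof (rule Inter_bounded_closed_convex_nonempty)
    show "\<F> \<noteq> {}"
      unfolding \<F>_def by blast
  next
    fix C
    assume "C \<in> \<F>"
    then obtain S where S: "finite S" "S \<subseteq> D" "C = B y0 \<inter> \<Inter>(B ` S)"
      unfolding \<F>_def by blast
    have "nonexpansive_on (insert y0 S) N"
      using assms \<open>y0 \<in> D\<close> S(2) unfolding nonexpansive_on_def by blast
    then obtain w where "\<forall>y\<in>insert y0 S. norm (w - N y) \<le> norm (z - y)"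
      using finite_nonexpansive_one_point_extension[of "insert y0 S"] S(1) by blast
    then have "w \<in> C"
      using S(3) B_iff by blast
    then show "closed C \<and> convex C \<and> C \<noteq> {}"
      using S(3) by (auto simp: B_def intro!: convex_Int convex_INT)
  next
    fix C C'
    assume "C \<in> \<F>" "C' \<in> \<F>"
    then obtain S S' where "finite S" "S \<subseteq> D" "C = B y0 \<inter> \<Inter>(B ` S)"
      "finite S'" "S' \<subseteq> D" "C' = B y0 \<inter> \<Inter>(B ` S')"
      unfolding \<F>_def by blast
    then have "C \<inter> C' = B y0 \<inter> \<Inter>(B ` (S \<union> S'))" "finite (S \<union> S')" "S \<union> S' \<subseteq> D"
      by auto
    then show "C \<inter> C' \<in> \<F>"
      unfolding \<F>_def by blast
  next
    have "\<Union>\<F> \<subseteq> B y0"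
      unfolding \<F>_def by blast
    then show "bounded (\<Union>\<F>)"
      by (rule bounded_subset[rotated]) (simp add: B_def)
  qed
  then obtain w where w: "w \<in> \<Inter>\<F>"
    by blast
  have "B y0 \<inter> \<Inter>(B ` {y}) \<in> \<F>" if "y \<in> D" for y
    unfolding \<F>_def using that by blast
  then show ?thesis
    using w B_iff by blast
qed simp

section \<open>Maximal comonotonicity\<close>

lemma comonotone_insert:
  assumes "comonotone \<rho> A"
    and "\<And>x u. (x, u) \<in> A \<Longrightarrow> \<rho> * (norm (q - u))\<^sup>2 \<le> inner (p - x) (q - u)"
  shows "comonotone \<rho> (insert (p, q) A)"
proof -
  have "\<rho> * (norm (u - q))\<^sup>2 \<le> inner (x - p) (u - q)" if "(x, u) \<in> A" for x u
    using assms(2)[OF that] by (metis inner_minus_left inner_minus_right minus_diff_eq norm_minus_commute)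
  with assms show ?thesis
    unfolding comonotone_def by auto
qed

lemma max_comonotone_imp_ran_id_plus_UNIV:
  fixes A :: "('a::{real_inner,complete_space} \<times> 'a) set"
  assumes "max_comonotone \<rho> A" "\<rho> > -1"
  shows "ran_id_plus A = UNIV"
proof -
  have com: "comonotone \<rho> A"
    using assms(1) unfolding max_comonotone_def by blast
  then obtain N where N: "nonexpansive_on (ran_id_plus A) N"
    and NA: "\<And>x u. (x, u) \<in> A \<Longrightarrow> N (x + u) = x - (2*\<rho>+1) *\<^sub>R u"
    using comonotone_imp_nonexpansive_reflection assms(2) by blast
  have "z \<in> ran_id_plus A" for z
  proof -
    obtain w where w: "\<And>y. y \<in> ran_id_plus A \<Longrightarrow> norm (w - N y) \<le> norm (z - y)"
      using nonexpansive_one_point_extension[OF N] by blast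
    define q where "q = (1 / (2*\<rho>+2)) *\<^sub>R (z - w)"
    define p where "p = z - q"
    have "(1 + (2*\<rho>+1)) *\<^sub>R q = z - w"
      using assms(2) by (simp add: q_def add.commute)
    then have "q + (2*\<rho>+1) *\<^sub>R q = z - w"
      by (simp only: scaleR_add_left scaleR_one)
    then have pq: "p + q = z" "p - (2*\<rho>+1) *\<^sub>R q = w"
      by (simp_all add: p_def diff_diff_eq)
    have "\<rho> * (norm (q - u))\<^sup>2 \<le> inner (p - x) (q - u)" if "(x, u) \<in> A" for x u
    proof -
      have "x + u \<in> ran_id_plus A"
        using that unfolding ran_id_plus_def by blast
      then have "norm (w - N (x + u)) \<le> norm (z - (x + u))"
        by (rule w)
      then have "norm ((p - x) - (2*\<rho>+1) *\<^sub>R (q - u)) \<le> norm ((p - x) + (q - u))"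
        unfolding NA[OF that] pq[symmetric] by (simp add: algebra_simps)
      then show ?thesis
        using comonotone_ineq_iff_norm_le[OF assms(2)] by blast
    qed
    then have "comonotone \<rho> (insert (p, q) A)"
      by (rule comonotone_insert[OF com])
    then have "insert (p, q) A = A"
      using assms(1) unfolding max_comonotone_def by (meson subset_insertI)
    then show ?thesis
      using pq(1) unfolding ran_id_plus_def by blast
  qed
  then show ?thesis
    by blast
qed

lemma comonotone_ran_id_plus_UNIV_imp_max_comonotone:
  assumes "comonotone \<rho> A" "\<rho> > -1" "ran_id_plus A = UNIV"
  shows "max_comonotone \<rho> A"
  unfolding max_comonotone_def
proof (intro conjI allI impI assms(1))
  fix B
  assume B: "comonotone \<rho> B \<and> A \<subseteq> B"
  have "(y, v) \<in> A" if "(y, v) \<in> B" for y v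
  proof -
    obtain x u where "(x, u) \<in> A" "y + v = x + u"
      using assms(3) unfolding ran_id_plus_def by blast
    with B that assms(2) show ?thesis
      using comonotone_Id_plus_inj[of \<rho> B y v x u] by blast
  qed
  with B show "B = A"
    by auto
qed

lemma max_comonotone_iff:
  fixes A :: "('a::{real_inner,complete_space} \<times> 'a) set"
  assumes "\<rho> > -1"
  shows "max_comonotone \<rho> A \<longleftrightarrow> comonotone \<rho> A \<and> ran_id_plus A = UNIV"
  by (meson assms max_comonotone_def max_comonotone_imp_ran_id_plus_UNIV
      comonotone_ran_id_plus_UNIV_imp_max_comonotone)

theorem proposition3p13:
  fixes A :: "('a::{real_inner, complete_space} \<times> 'a) set"
    and \<rho> :: real
  assumes "Domain A \<noteq> {}"
    and "\<rho> > -1"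
  defines "D \<equiv> ran_id_plus A"
    and "T \<equiv> resolvent A"
    and "\<alpha> \<equiv> 1 / (2 * (\<rho> + 1))"
  shows "(comonotone \<rho> A \<longleftrightarrow> conically_nonexpansive (1 / (2 * (\<rho> + 1))) D T)
    \<and> (max_comonotone \<rho> A \<longleftrightarrow> conically_nonexpansive \<alpha> D T \<and> D = UNIV)
    \<and> (comonotone (-1/2) A \<longleftrightarrow> nonexpansive_op D T)
    \<and> (max_comonotone (-1/2) A \<longleftrightarrow> nonexpansive_op D T \<and> D = UNIV)
    \<and> (comonotone \<rho> A \<and> \<rho> > -1/2 \<longleftrightarrow> averaged \<alpha> D T)
    \<and> (max_comonotone \<rho> A \<and> \<rho> > -1/2 \<longleftrightarrow> averaged \<alpha> D T \<and> D = UNIV)"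
proof -
  have i: "comonotone \<rho> A \<longleftrightarrow> conically_nonexpansive \<alpha> D T"
    unfolding D_def T_def \<alpha>_def by (rule comonotone_iff_conically_nonexpansive[OF assms(2)])
  have ii: "max_comonotone \<rho> A \<longleftrightarrow> conically_nonexpansive \<alpha> D T \<and> D = UNIV"
    using max_comonotone_iff[OF assms(2)] i unfolding D_def by blast
  have iii: "comonotone (-1/2) A \<longleftrightarrow> nonexpansive_op D T"
    using comonotone_iff_conically_nonexpansive[of "-1/2" A]
    unfolding D_def T_def nonexpansive_op_iff_conically_nonexpansive_1 by simp
  have iv: "max_comonotone (-1/2) A \<longleftrightarrow> nonexpansive_op D T \<and> D = UNIV"
    using max_comonotone_iff[of "-1/2" A] iii unfolding D_def by simp
  have \<alpha>: "0 < \<alpha>" "\<alpha> < 1 \<longleftrightarrow> \<rho> > -1/2"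
    using assms(2) by (auto simp: \<alpha>_def field_simps)
  have v: "comonotone \<rho> A \<and> \<rho> > -1/2 \<longleftrightarrow> averaged \<alpha> D T"
    unfolding averaged_def using i \<alpha> by blast
  have vi: "max_comonotone \<rho> A \<and> \<rho> > -1/2 \<longleftrightarrow> averaged \<alpha> D T \<and> D = UNIV"
    unfolding averaged_def using ii \<alpha> by blast
  show ?thesis
    using i ii iii iv v vi unfolding \<alpha>_def by blast
qed

end
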